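(* Let $b\ge 0$ and $h\ge 2b+1$ be integers, let $H$ be a set of $h$ vertices, and fix $\beta>0$. Let $M^1,M^2,M^3$ be any three transition matrices (as defined in the context). Then the product $M^1M^2M^3$ is a scrambling matrix, i.e. it has at least one column all of whose entries are strictly positive.
   Context: A reduced graph on $H$ is a directed graph obtained from the complete directed graph (without self-loops) on $H$ by deleting, for each vertex, an arbitrary set of $b$ of its incoming edges. A transition matrix is an $h\times h$ row-stochastic matrix $M$ with nonnegative real entries, rows and columns indexed by $H$, for which there is a reduced graph $R$ on $H$ such that $M_{ij}\ge\beta$ whenever $j=i$ or $(j,i)$ is an edge of $R$. (This models one phase of $D$ iterations of the Relay-IABC protocol: honest node $i$'s new state is a weighted combination, with weights at least $\beta$, of its own state and the states of its in-neighbors in the reduced graph remaining after trimming.) *)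

theory Defs
  imports Complex_Main
begin

text \<open>Matrices with rows and columns indexed by a finite set H are functions
  'a => 'a => real (only entries on H x H are relevant).\<close>

definition mat_mult :: "'a set \<Rightarrow> ('a \<Rightarrow> 'a \<Rightarrow> real) \<Rightarrow> ('a \<Rightarrow> 'a \<Rightarrow> real) \<Rightarrow> ('a \<Rightarrow> 'a \<Rightarrow> real)" where
  "mat_mult H M N = (\<lambda>i j. \<Sum>k\<in>H. M i k * N k j)"

text \<open>A reduced graph on H: from the complete digraph without self-loops, delete for
  each vertex i a set D i of exactly b incoming edges (edges (j,i) with j in D i).
  An edge (j,i) goes from j to i.\<close>

definition reduced_graph :: "'a set \<Rightarrow> nat \<Rightarrow> ('a \<times> 'a) set \<Rightarrow> bool" where
  "reduced_graph H b R \<longleftrightarrow>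
     (\<exists>D. (\<forall>i\<in>H. D i \<subseteq> H - {i} \<and> card (D i) = b) \<and>
          R = {(j, i). i \<in> H \<and> j \<in> H \<and> j \<noteq> i \<and> j \<notin> D i})"

definition row_stochastic :: "'a set \<Rightarrow> ('a \<Rightarrow> 'a \<Rightarrow> real) \<Rightarrow> bool" where
  "row_stochastic H M \<longleftrightarrow>
     (\<forall>i\<in>H. \<forall>j\<in>H. 0 \<le> M i j) \<and> (\<forall>i\<in>H. (\<Sum>j\<in>H. M i j) = 1)"

definition transition_matrix :: "'a set \<Rightarrow> nat \<Rightarrow> real \<Rightarrow> ('a \<Rightarrow> 'a \<Rightarrow> real) \<Rightarrow> bool" where
  "transition_matrix H b \<beta> M \<longleftrightarrow>
     row_stochastic H M \<and>
     (\<exists>R. reduced_graph H b R \<and>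
          (\<forall>i\<in>H. \<forall>j\<in>H. (j = i \<or> (j, i) \<in> R) \<longrightarrow> \<beta> \<le> M i j))"

definition scrambling :: "'a set \<Rightarrow> ('a \<Rightarrow> 'a \<Rightarrow> real) \<Rightarrow> bool" where
  "scrambling H M \<longleftrightarrow> (\<exists>j\<in>H. \<forall>i\<in>H. 0 < M i j)"

end

theory Submission
  imports Defs
begin

text \<open>Call an entry of a transition matrix strong if it is at least \<beta>. Each row has at least
  h - b strong entries, so by double counting some column of M2 does too. Since
  2 (h - b) > h, every strong row of M1 meets that strong column of M2, hence the column is
  positive in M1 M2. Multiplying by M3, whose diagonal is positive, keeps the column positive.\<close>

lemma transition_matrix_nonneg:
  assumes "transition_matrix H b \<beta> M"
  shows "\<forall>i\<in>H. \<forall>j\<in>H. 0 \<le> M i j"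
  using assms unfolding transition_matrix_def row_stochastic_def by blast

lemma transition_matrix_diag_ge:
  assumes "transition_matrix H b \<beta> M" "i \<in> H"
  shows "\<beta> \<le> M i i"
  using assms unfolding transition_matrix_def by blast

lemma transition_matrix_card_row_ge:
  assumes "finite H" "transition_matrix H b \<beta> M" "i \<in> H"
  shows "card H - b \<le> card {j\<in>H. \<beta> \<le> M i j}"
proof -
  obtain R where "reduced_graph H b R"
    and R_ge: "\<forall>i\<in>H. \<forall>j\<in>H. (j = i \<or> (j, i) \<in> R) \<longrightarrow> \<beta> \<le> M i j"
    using assms(2) unfolding transition_matrix_def by blast
  then obtain D where D: "\<forall>i\<in>H. D i \<subseteq> H - {i} \<and> card (D i) = b"
    and R: "R = {(j, i). i \<in> H \<and> j \<in> H \<and> j \<noteq> i \<and> j \<notin> D i}"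
    unfolding reduced_graph_def by blast
  have "D i \<subseteq> H" "card (D i) = b"
    using D assms(3) by auto
  then have "card (H - D i) = card H - b"
    using assms(1) by (simp add: card_Diff_subset finite_subset)
  moreover have "H - D i \<subseteq> {j\<in>H. \<beta> \<le> M i j}"
    using R_ge assms(3) unfolding R by auto
  ultimately show ?thesis
    using card_mono[of "{j\<in>H. \<beta> \<le> M i j}" "H - D i"] assms(1) by simp
qed

lemma sum_card_columns_eq_sum_card_rows:
  assumes "finite H"
  shows "(\<Sum>j\<in>H. card {k\<in>H. P k j}) = (\<Sum>k\<in>H. card {j\<in>H. P k j})"
proof -
  have "(\<Sum>j\<in>H. card {k\<in>H. P k j}) = (\<Sum>j\<in>H. \<Sum>k\<in>H. if P k j then 1 else 0)"
    using assms by (simp add: sum.If_cases Int_def)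
  also have "\<dots> = (\<Sum>k\<in>H. \<Sum>j\<in>H. if P k j then 1 else 0)"
    by (rule sum.swap)
  also have "\<dots> = (\<Sum>k\<in>H. card {j\<in>H. P k j})"
    using assms by (simp add: sum.If_cases Int_def)
  finally show ?thesis .
qed

lemma column_card_ge_if_rows_card_ge:
  assumes "finite H" "H \<noteq> {}" "\<forall>k\<in>H. r \<le> card {j\<in>H. P k j}"
  shows "\<exists>j\<in>H. r \<le> card {k\<in>H. P k j}"
proof (rule ccontr)
  assume "\<not> ?thesis"
  then have "(\<Sum>j\<in>H. card {k\<in>H. P k j}) < (\<Sum>j\<in>H. r)"
    using assms(1,2) by (intro sum_strict_mono) auto
  also have "\<dots> \<le> (\<Sum>k\<in>H. card {j\<in>H. P k j})"
    using assms(3) by (intro sum_mono) auto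
  finally show False
    using sum_card_columns_eq_sum_card_rows[OF assms(1), of P] by simp
qed

lemma Int_not_empty_if_card_add_gt:
  assumes "finite H" "A \<subseteq> H" "B \<subseteq> H" "card H < card A + card B"
  shows "A \<inter> B \<noteq> {}"
proof
  assume "A \<inter> B = {}"
  then have "card (A \<union> B) = card A + card B"
    using assms(1-3) by (meson card_Un_disjoint finite_subset)
  moreover have "card (A \<union> B) \<le> card H"
    using assms(1-3) by (simp add: card_mono)
  ultimately show False
    using assms(4) by simp
qed

lemma mat_mult_nonneg:
  assumes "finite H" "\<forall>i\<in>H. \<forall>j\<in>H. 0 \<le> M i j" "\<forall>i\<in>H. \<forall>j\<in>H. 0 \<le> N i j"
    and "i \<in> H" "j \<in> H"
  shows "0 \<le> mat_mult H M N i j"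
  unfolding mat_mult_def using assms by (auto intro!: sum_nonneg)

lemma mat_mult_pos:
  assumes "finite H" "\<forall>i\<in>H. \<forall>j\<in>H. 0 \<le> M i j" "\<forall>i\<in>H. \<forall>j\<in>H. 0 \<le> N i j"
    and "i \<in> H" "j \<in> H" "k \<in> H" "0 < M i k" "0 < N k j"
  shows "0 < mat_mult H M N i j"
proof -
  have "0 < M i k * N k j"
    using assms(7,8) by simp
  also have "\<dots> \<le> (\<Sum>l\<in>H. M i l * N l j)"
    using assms by (intro member_le_sum) auto
  finally show ?thesis
    unfolding mat_mult_def .
qed

lemma scrambling_mat_mult_pos_diag:
  assumes "finite H" "\<forall>i\<in>H. \<forall>j\<in>H. 0 \<le> P i j" "\<forall>i\<in>H. \<forall>j\<in>H. 0 \<le> N i j"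
    and "\<forall>i\<in>H. 0 < N i i" "scrambling H P"
  shows "scrambling H (mat_mult H P N)"
proof -
  obtain j where "j \<in> H" and "\<forall>i\<in>H. 0 < P i j"
    using assms(5) unfolding scrambling_def by blast
  then have "\<forall>i\<in>H. 0 < mat_mult H P N i j"
    using mat_mult_pos[OF assms(1-3), where k = j] assms(4) by blast
  then show ?thesis
    unfolding scrambling_def using \<open>j \<in> H\<close> by blast
qed

lemma scrambling_mat_mult_transition_matrix:
  assumes "finite H" "card H \<ge> 2 * b + 1" "\<beta> > 0"
    and M1: "transition_matrix H b \<beta> M1" and M2: "transition_matrix H b \<beta> M2"
  shows "scrambling H (mat_mult H M1 M2)"
proof -
  have "H \<noteq> {}"
    using assms(2) by auto
  then obtain j where "j \<in> H" and column_j: "card H - b \<le> card {k\<in>H. \<beta> \<le> M2 k j}"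
    using column_card_ge_if_rows_card_ge[of H "card H - b" "\<lambda>k j. \<beta> \<le> M2 k j"]
      transition_matrix_card_row_ge[OF assms(1) M2] assms(1) by blast
  have "0 < mat_mult H M1 M2 i j" if "i \<in> H" for i
  proof -
    have "card H < card {k\<in>H. \<beta> \<le> M1 i k} + card {k\<in>H. \<beta> \<le> M2 k j}"
      using transition_matrix_card_row_ge[OF assms(1) M1 \<open>i \<in> H\<close>] column_j assms(2)
      by simp
    then have "{k\<in>H. \<beta> \<le> M1 i k} \<inter> {k\<in>H. \<beta> \<le> M2 k j} \<noteq> {}"
      by (intro Int_not_empty_if_card_add_gt[OF assms(1)]) auto
    then obtain k where k: "k \<in> H" "\<beta> \<le> M1 i k" "\<beta> \<le> M2 k j"
      by blast
    show ?thesis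
    proof (rule mat_mult_pos[OF assms(1) _ _ \<open>i \<in> H\<close> \<open>j \<in> H\<close> k(1)])
      show "\<forall>i\<in>H. \<forall>j\<in>H. 0 \<le> M1 i j" "\<forall>i\<in>H. \<forall>j\<in>H. 0 \<le> M2 i j"
        by (fact transition_matrix_nonneg[OF M1] transition_matrix_nonneg[OF M2])+
      show "0 < M1 i k" "0 < M2 k j"
        using k assms(3) by linarith+
    qed
  qed
  then show ?thesis
    unfolding scrambling_def using \<open>j \<in> H\<close> by blast
qed

theorem theorem2:
  fixes H :: "'a set" and b h :: nat and \<beta> :: real
    and M1 M2 M3 :: "'a \<Rightarrow> 'a \<Rightarrow> real"
  assumes "finite H" and "card H = h" and "h \<ge> 2 * b + 1"
    and "\<beta> > 0"
    and "transition_matrix H b \<beta> M1"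
    and "transition_matrix H b \<beta> M2"
    and "transition_matrix H b \<beta> M3"
  shows "scrambling H (mat_mult H (mat_mult H M1 M2) M3)"
proof (rule scrambling_mat_mult_pos_diag[OF assms(1)])
  show "scrambling H (mat_mult H M1 M2)"
    by (rule scrambling_mat_mult_transition_matrix) (use assms in simp_all)
  show "\<forall>i\<in>H. \<forall>j\<in>H. 0 \<le> mat_mult H M1 M2 i j"
    using mat_mult_nonneg[OF assms(1) transition_matrix_nonneg[OF assms(5)]
        transition_matrix_nonneg[OF assms(6)]] by blast
  show "\<forall>i\<in>H. \<forall>j\<in>H. 0 \<le> M3 i j"
    by (rule transition_matrix_nonneg[OF assms(7)])
  show "\<forall>i\<in>H. 0 < M3 i i"
    using transition_matrix_diag_ge[OF assms(7)] assms(4) by (auto intro: less_le_trans)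
qed

end
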